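(* Let $p$ be an odd prime, $l\ge 2$ an integer, and $d$ a positive integer with $p\nmid d$. Then the arithmetic progression $p^l+6dn$, $n=0,1,2,\ldots$, contains no $p$ consecutive terms $p^l+6dn,\,p^l+6d(n+1),\ldots,p^l+6d(n+p-1)$ that are all prime; i.e. it contains no $p$-tuple of primes. *)

theory Defs
  imports "HOL-Computational_Algebra.Primes"
begin

end

theory Submission
  imports Defs
begin

text \<open>Among the \<open>p\<close> consecutive indices \<open>n, \<dots>, n + p - 1\<close> one is a multiple of \<open>p\<close>;
  the corresponding term is then a proper multiple of \<open>p\<close>, since \<open>p\<^sup>2 \<le> p ^ l\<close>.\<close>

lemma exists_dvd_among_consecutive:
  fixes p n :: nat
  assumes "p > 0"
  obtains k where "k < p" and "p dvd n + k"
proof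
  show "(p - n mod p) mod p < p" using assms by simp
  have "(n + (p - n mod p) mod p) mod p = (n mod p + (p - n mod p)) mod p"
    by (metis mod_add_eq mod_mod_trivial)
  also have "\<dots> = 0" using assms by simp
  finally show "p dvd n + (p - n mod p) mod p" by presburger
qed

lemma not_prime_power_plus_multiple:
  fixes p l c m :: nat
  assumes "prime p" and "l \<ge> 2" and "p dvd m"
  shows "\<not> prime (p ^ l + c * m)"
proof
  assume prime_sum: "prime (p ^ l + c * m)"
  have "p dvd p ^ l + c * m" using assms by (simp add: dvd_power)
  with prime_sum \<open>prime p\<close> have "p = p ^ l + c * m"
    using primes_dvd_imp_eq by blast
  moreover have "p < p ^ l"
    using assms prime_gt_1_nat[of p] power_strict_increasing[of 1 l p] by simp
  ultimately show False by simp
qed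

theorem corollary3p5:
  fixes p l d :: nat
  assumes "prime p" and "odd p" and "l \<ge> 2" and "d > 0" and "\<not> p dvd d"
  shows "\<not> (\<exists>n::nat. \<forall>k<p. prime (p ^ l + 6 * d * (n + k)))"
proof
  assume "\<exists>n. \<forall>k<p. prime (p ^ l + 6 * d * (n + k))"
  then obtain n where all_prime: "\<forall>k<p. prime (p ^ l + 6 * d * (n + k))" by blast
  obtain k where "k < p" and "p dvd n + k"
    using exists_dvd_among_consecutive prime_gt_0_nat[OF \<open>prime p\<close>] by blast
  then show False
    using all_prime not_prime_power_plus_multiple[OF \<open>prime p\<close> \<open>l \<ge> 2\<close>] by blast
qed

end
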